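(* Let $0<\alpha<1$ and $f>0$. Then the function $$t\mapsto\left(\frac{t}{(1-\alpha)f+\alpha t}\right)^{\frac{1}{1-\alpha}}\cdot\frac{f}{t}$$ is increasing in $t$ on the range of $t>0$ with $\frac{f}{t}\ge 1$. *)

theory Defs
  imports "HOL-Analysis.Analysis"
begin

end

theory Submission
  imports Defs
begin

text \<open>Since \<open>(1 - \<alpha>) p = 1\<close> for \<open>p = 1 / (1 - \<alpha>)\<close>, the function equals
  \<open>f (t\<^sup>\<alpha> / ((1 - \<alpha>) f + \<alpha> t))\<^sup>p\<close>, so it suffices that \<open>t\<^sup>\<alpha> / ((1 - \<alpha>) f + \<alpha> t)\<close> increases
  on \<open>0 < t \<le> f\<close>. Writing \<open>s = u t\<close> with \<open>0 < u \<le> 1\<close>, the weighted AM-GM inequality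
  \<open>u\<^sup>\<alpha> \<le> 1 - \<alpha> + \<alpha> u\<close> reduces this to \<open>\<alpha> (1 - \<alpha>) (f - t) (1 - u) \<ge> 0\<close>.\<close>

lemma powr_le_weighted_mean:
  fixes u \<alpha> :: real
  assumes "0 < u" "0 \<le> \<alpha>" "\<alpha> \<le> 1"
  shows "u powr \<alpha> \<le> (1 - \<alpha>) + \<alpha> * u"
  using Youngs_inequality_0 [of \<alpha> "1 - \<alpha>" u 1] assms by simp

lemma mono_on_powr_div_affine:
  fixes \<alpha> f :: real
  assumes "0 \<le> \<alpha>" "\<alpha> \<le> 1"
  shows "mono_on {0<..f} (\<lambda>t. t powr \<alpha> / ((1 - \<alpha>) * f + \<alpha> * t))"
proof (rule mono_onI)
  define D where "D t = (1 - \<alpha>) * f + \<alpha> * t" for t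
  fix s t assume "s \<in> {0<..f}" "t \<in> {0<..f}" "s \<le> t"
  then have "0 < s" "s \<le> t" "t \<le> f" by auto
  have D_ge: "x \<le> D x" if "x \<le> f" for x
    using that assms mult_left_mono [of x f "1 - \<alpha>"] by (simp add: D_def algebra_simps)
  have "s powr \<alpha> = t powr \<alpha> * (s / t) powr \<alpha>"
    using \<open>0 < s\<close> \<open>s \<le> t\<close> by (simp add: powr_divide)
  also have "\<dots> \<le> t powr \<alpha> * ((1 - \<alpha>) + \<alpha> * (s / t))"
    using \<open>0 < s\<close> \<open>s \<le> t\<close> assms by (intro mult_left_mono powr_le_weighted_mean) auto
  finally have s_bound: "s powr \<alpha> \<le> t powr \<alpha> * ((1 - \<alpha>) + \<alpha> * (s / t))" .
  have "D s - ((1 - \<alpha>) + \<alpha> * (s / t)) * D t = \<alpha> * (1 - \<alpha>) * (f - t) * (t - s) / t"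
    using \<open>0 < s\<close> \<open>s \<le> t\<close> by (simp add: D_def field_simps)
  also have "\<dots> \<ge> 0"
    using \<open>0 < s\<close> \<open>s \<le> t\<close> \<open>t \<le> f\<close> assms by simp
  finally have D_bound: "((1 - \<alpha>) + \<alpha> * (s / t)) * D t \<le> D s" by simp
  have "0 < D s" "0 < D t"
    using D_ge [of s] D_ge [of t] \<open>0 < s\<close> \<open>s \<le> t\<close> \<open>t \<le> f\<close> by auto
  have "s powr \<alpha> * D t \<le> t powr \<alpha> * ((1 - \<alpha>) + \<alpha> * (s / t)) * D t"
    using s_bound \<open>0 < D t\<close> by (simp add: mult_right_mono)
  also have "\<dots> \<le> t powr \<alpha> * D s"
    using D_bound by (simp add: mult.assoc mult_left_mono)
  finally show "s powr \<alpha> / D s \<le> t powr \<alpha> / D t"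
    using \<open>0 < D s\<close> \<open>0 < D t\<close> by (simp add: divide_simps)
qed

lemma powr_div_mult_div_eq:
  fixes t d f \<alpha> :: real
  assumes "0 < t" "0 < d" "\<alpha> < 1"
  shows "(t / d) powr (1 / (1 - \<alpha>)) * (f / t) = f * (t powr \<alpha> / d) powr (1 / (1 - \<alpha>))"
proof -
  define p where "p = 1 / (1 - \<alpha>)"
  have "\<alpha> * p = p - 1"
    using assms by (simp add: p_def field_simps)
  then have "(t powr \<alpha> / d) powr p = t powr (p - 1) / d powr p"
    using assms by (simp add: powr_divide powr_powr)
  also have "\<dots> = (t / d) powr p / t"
    using assms by (simp add: powr_diff powr_divide)
  finally show ?thesis
    by (simp add: p_def)
qed

theorem mainTheorem10:
  fixes \<alpha> f :: real
  assumes "0 < \<alpha>" and "\<alpha> < 1" and "0 < f"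
  shows "mono_on {t::real. 0 < t \<and> f / t \<ge> 1}
           (\<lambda>t. (t / ((1 - \<alpha>) * f + \<alpha> * t)) powr (1 / (1 - \<alpha>)) * (f / t))"
proof (rule mono_onI)
  define D where "D t = (1 - \<alpha>) * f + \<alpha> * t" for t
  fix s t assume "s \<in> {t. 0 < t \<and> f / t \<ge> 1}" "t \<in> {t. 0 < t \<and> f / t \<ge> 1}" "s \<le> t"
  then have "s \<in> {0<..f}" "t \<in> {0<..f}" "0 < s" "0 < t"
    by (auto simp: le_divide_eq)
  have "0 < D s" "0 < D t"
    using \<open>0 < s\<close> \<open>0 < t\<close> assms by (simp_all add: D_def add_pos_pos)
  have "s powr \<alpha> / D s \<le> t powr \<alpha> / D t"
    using mono_on_powr_div_affine [of \<alpha> f] \<open>s \<in> {0<..f}\<close> \<open>t \<in> {0<..f}\<close> \<open>s \<le> t\<close> assms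
    by (simp add: D_def mono_on_def)
  then have "f * (s powr \<alpha> / D s) powr (1 / (1 - \<alpha>)) \<le> f * (t powr \<alpha> / D t) powr (1 / (1 - \<alpha>))"
    using \<open>0 < D s\<close> assms by (intro mult_left_mono powr_mono2) auto
  then show "(s / ((1 - \<alpha>) * f + \<alpha> * s)) powr (1 / (1 - \<alpha>)) * (f / s)
      \<le> (t / ((1 - \<alpha>) * f + \<alpha> * t)) powr (1 / (1 - \<alpha>)) * (f / t)"
    using powr_div_mult_div_eq \<open>0 < s\<close> \<open>0 < t\<close> \<open>0 < D s\<close> \<open>0 < D t\<close> assms
    by (simp add: D_def)
qed

end
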